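(* Let $d, s, t$ be positive integers with $d \geq 3t-5$. Then \[ \mathrm{rb}(W_d(s), F_t) = \begin{cases} \left\lfloor \dfrac{2t-5}{t-2}\, d \right\rfloor + 1, & \text{if } s = 1 \text{ and } t \geq 4,\\[6pt] \left\lfloor \dfrac{3t-10}{t-3}\, d \right\rfloor + 1, & \text{if } s = 2 \text{ and } t \geq 6,\\[6pt] \left\lfloor \dfrac{(s+1)t-(3s+4)}{t-3}\, d \right\rfloor + 1, & \text{if } s \geq 3 \text{ and } t \geq 7. \end{cases} \]
   Context: A subgraph of an edge-colored graph is rainbow if no two of its edges have the same color. For graphs $G$ and $H$, the rainbow number $\mathrm{rb}(G,H)$ is the minimum integer $k$ such that every edge-coloring of $G$ that uses at least $k$ distinct colors contains a rainbow subgraph isomorphic to $H$. For $d \ge 3$ and $s \ge 1$, the $s$-hubbed wheel $W_d(s) = \overline{K_s} + C_d$ has vertex set $\{u_1,\dots,u_s\} \cup \{v_1,\dots,v_d\}$, where $v_1v_2\cdots v_dv_1$ is a cycle $C_d$, the hub vertices $u_1,\dots,u_s$ are pairwise non-adjacent, and every $u_a$ is adjacent to every $v_i$. Edges $u_av_i$ are spokes; edges $v_iv_{i+1}$ (indices mod $d$) are rim edges. $W_d := W_d(1)$ is the ordinary wheel. For $t \ge 3$, the fan $F_t$ is the graph obtained from a cycle $v_1v_2\cdots v_tv_1$ by adding all chords $v_1v_i$ for $3 \le i \le t-1$. *)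

theory Defs
  imports Complex_Main
begin

text \<open>Simple graphs are given by a set of edges, each edge a 2-element vertex set.\<close>

text \<open>The s-hubbed wheel W_d(s): hubs Inl a (a < s), rim vertices Inr i (i < d),
  rim cycle Inr 0, Inr 1, ..., Inr (d-1), Inr 0.\<close>
definition hubbed_wheel :: "nat \<Rightarrow> nat \<Rightarrow> (nat + nat) set set" where
  "hubbed_wheel d s =
     {{Inl a, Inr i} | a i. a < s \<and> i < d} \<union>
     {{Inr i, Inr ((i + 1) mod d)} | i. i < d}"

text \<open>Fan F_t on vertices 0..t-1 (vertex 0 plays the role of v_1): the cycle
  0,1,...,t-1,0 together with the chords {0,i} for 2 \<le> i \<le> t-2.\<close>
definition fan_vertices :: "nat \<Rightarrow> nat set" where
  "fan_vertices t = {..<t}"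

definition fan_edges :: "nat \<Rightarrow> nat set set" where
  "fan_edges t =
     {{i, (i + 1) mod t} | i. i < t} \<union> {{0, i} | i. 2 \<le> i \<and> i + 2 \<le> t}"

definition has_rainbow_copy ::
  "'a set set \<Rightarrow> ('a set \<Rightarrow> nat) \<Rightarrow> 'b set \<Rightarrow> 'b set set \<Rightarrow> bool" where
  "has_rainbow_copy EG c VH EH \<longleftrightarrow>
     (\<exists>f. inj_on f VH \<and> (\<forall>e\<in>EH. f ` e \<in> EG) \<and> inj_on (\<lambda>e. c (f ` e)) EH)"

text \<open>Rainbow number rb(G,H): least k such that every edge-colouring of G using at least
  k distinct colours contains a rainbow copy of H. (Colours are natural numbers, which
  is no loss of generality.)\<close>
definition rainbow_number :: "'a set set \<Rightarrow> 'b set \<Rightarrow> 'b set set \<Rightarrow> nat" where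
  "rainbow_number EG VH EH =
     (LEAST k. \<forall>c :: 'a set \<Rightarrow> nat. card (c ` EG) \<ge> k \<longrightarrow> has_rainbow_copy EG c VH EH)"

end

theory Submission
  imports Defs
begin

text \<open>
  Let \<open>T = t - 2\<close>. A copy of \<open>F\<^sub>t\<close> centred at a hub \<open>a\<close> consists of the \<open>T + 1\<close>
  spokes from \<open>a\<close> to consecutive rim vertices \<open>j, \<dots>, j + T\<close> and the \<open>T\<close> rim edges between
  them; call this edge set a window. A rim vertex has only two rim neighbours and the hubs are
  pairwise non-adjacent, so in the stated ranges of \<open>s\<close> and \<open>t\<close> the centre of a copy is a hub,
  except possibly for \<open>F\<^sub>4\<close> with one hub, where an automorphism of the fan moves the centre onto
  the hub. Hence a colouring contains a rainbow \<open>F\<^sub>t\<close> iff some window is rainbow.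

  Let \<open>W = T\<close> if \<open>s = 1\<close> and \<open>W = T - 1\<close> otherwise. If no window is rainbow, each of the
  \<open>s d\<close> windows contains two edges of one colour class; a gap argument on the rim cycle, which
  needs \<open>d \<ge> 3 t - 5\<close>, shows that a class \<open>C\<close> does this for at most \<open>s W (|C| - 1)\<close> windows, whence
  \<open>d \<le> W (|E| - #colours)\<close>. Conversely, mark \<open>\<lceil>d / W\<rceil>\<close> rim positions \<open>W\<close> apart and give
  the spoke (\<open>s = 1\<close>) or the next rim edge (\<open>s \<ge> 2\<close>) at each mark the colour of the rim
  edge there: every window repeats a colour, and only \<open>\<lceil>d / W\<rceil>\<close> colours are lost.
\<close>

section \<open>Intervals and walks on a cycle\<close>

lemma round_up_div:
  fixes d W :: nat
  assumes "0 < W"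
  shows "d \<le> (d + W - 1) div W * W" "(d + W - 1) div W * W < d + W"
  using div_mult_mod_eq[of "d + W - 1" W] mod_less_divisor[OF assms, of "d + W - 1"] assms
  by linarith+

lemma mod_add_right_cancel_less:
  fixes i j j' d :: nat
  assumes "j < d" "j' < d" "(j + i) mod d = (j' + i) mod d"
  shows "j = j'"
proof -
  have *: "x = y" if "y \<le> x" "x < d" "(x + i) mod d = (y + i) mod d" for x y :: nat
  proof -
    have "d dvd x - y"
      using that mod_eq_dvd_iff_nat[of "y + i" "x + i" d] by simp
    moreover have "x - y < d" using that by simp
    ultimately have "x - y = 0" using nat_dvd_not_less by blast
    then show ?thesis using that(1) by simp
  qed
  show ?thesis using *[of j' j] *[of j j'] assms by (cases "j' \<le> j") auto
qed

definition hit_starts :: "nat \<Rightarrow> nat set \<Rightarrow> nat \<Rightarrow> nat set" where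
  "hit_starts d A w = {j. j < d \<and> (\<exists>i<w. (j + i) mod d \<in> A)}"

definition double_hit_starts :: "nat \<Rightarrow> nat set \<Rightarrow> nat \<Rightarrow> nat set" where
  "double_hit_starts d A w =
     {j. j < d \<and> (\<exists>i1 i2. i1 < i2 \<and> i2 < w \<and> (j + i1) mod d \<in> A \<and> (j + i2) mod d \<in> A)}"

lemma double_hit_startsI:
  assumes "i1 \<noteq> i2" "i1 < w" "i2 < w" "j < d" "(j + i1) mod d \<in> A" "(j + i2) mod d \<in> A"
  shows "j \<in> double_hit_starts d A w"
proof (cases "i1 < i2")
  case True
  then show ?thesis using assms unfolding double_hit_starts_def by blast
next
  case False
  then have "i2 < i1" using assms(1) by simp
  then show ?thesis using assms unfolding double_hit_starts_def by blast
qed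

lemma double_hit_starts_mono: "w \<le> w' \<Longrightarrow> double_hit_starts d A w \<subseteq> double_hit_starts d A w'"
  unfolding double_hit_starts_def by fastforce

lemma double_hit_starts_subset_hit_starts: "double_hit_starts d A w \<subseteq> hit_starts d A w"
  unfolding double_hit_starts_def hit_starts_def by fastforce

lemma finite_hit_starts [simp]: "finite (hit_starts d A w)"
  unfolding hit_starts_def by simp

lemma finite_double_hit_starts [simp]: "finite (double_hit_starts d A w)"
  unfolding double_hit_starts_def by simp

lemma hit_starts_empty [simp]: "hit_starts d {} w = {}"
  unfolding hit_starts_def by simp

lemma double_hit_starts_empty [simp]: "double_hit_starts d {} w = {}"
  unfolding double_hit_starts_def by simp

lemma card_hit_starts_single: "card (hit_starts d {a} w) \<le> w"
proof -
  define offset where "offset j = (LEAST i. i < w \<and> (j + i) mod d = a)" for j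
  have offset: "offset j < w \<and> (j + offset j) mod d = a" if j: "j \<in> hit_starts d {a} w" for j
  proof -
    obtain i where "i < w" "(j + i) mod d = a" using j unfolding hit_starts_def by auto
    then show ?thesis unfolding offset_def by (rule LeastI[where P = "\<lambda>i. i < w \<and> (j + i) mod d = a", OF conjI])
  qed
  have "inj_on offset (hit_starts d {a} w)"
  proof (rule inj_onI)
    fix x y assume "x \<in> hit_starts d {a} w" "y \<in> hit_starts d {a} w" "offset x = offset y"
    then show "x = y"
      using offset[of x] offset[of y] mod_add_right_cancel_less[of x d y "offset x"]
      unfolding hit_starts_def by auto
  qed
  moreover have "offset ` hit_starts d {a} w \<subseteq> {..<w}" using offset by auto
  ultimately show ?thesis using card_inj_on_le[of offset _ "{..<w}"] by simp
qed

lemma card_hit_starts: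
  assumes "finite A"
  shows "card (hit_starts d A w) \<le> w * card A"
proof -
  have "hit_starts d A w = (\<Union>a\<in>A. hit_starts d {a} w)"
    unfolding hit_starts_def by auto
  then have "card (hit_starts d A w) \<le> (\<Sum>a\<in>A. card (hit_starts d {a} w))"
    using card_UN_le[OF assms] by simp
  also have "\<dots> \<le> (\<Sum>a\<in>A. w)" by (rule sum_mono) (rule card_hit_starts_single)
  finally show ?thesis by (simp add: mult.commute)
qed

definition cyclic_gap :: "nat \<Rightarrow> nat set \<Rightarrow> nat \<Rightarrow> nat" where
  "cyclic_gap d A a = (LEAST g. 0 < g \<and> (a + g) mod d \<in> A)"

lemma cyclic_gap:
  assumes "A \<subseteq> {..<d}" "a \<in> A"
  shows "0 < cyclic_gap d A a" "(a + cyclic_gap d A a) mod d \<in> A"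
proof -
  have "0 < d \<and> (a + d) mod d \<in> A" using assms by auto
  then have "0 < cyclic_gap d A a \<and> (a + cyclic_gap d A a) mod d \<in> A"
    unfolding cyclic_gap_def by (rule LeastI[where P = "\<lambda>g. 0 < g \<and> (a + g) mod d \<in> A"])
  then show "0 < cyclic_gap d A a" "(a + cyclic_gap d A a) mod d \<in> A" by auto
qed

lemma cyclic_gap_le: "0 < k \<Longrightarrow> (a + k) mod d \<in> A \<Longrightarrow> cyclic_gap d A a \<le> k"
  unfolding cyclic_gap_def by (rule Least_le) simp

text \<open>A doubly hit start is determined by its first hit \<open>a\<close> and the offset of that hit;
  the second hit lies at least \<open>cyclic_gap d A a\<close> further on.\<close>

lemma card_double_hit_starts_le_sum_gaps:
  assumes A: "A \<subseteq> {..<d}"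
  shows "card (double_hit_starts d A w) \<le> (\<Sum>a\<in>A. w - cyclic_gap d A a)"
proof -
  have finA: "finite A" using A finite_subset by blast
  define first where "first j = (LEAST i. i < w \<and> (j + i) mod d \<in> A)" for j
  define pos where "pos j = ((j + first j) mod d, first j)" for j
  have pos: "pos j \<in> (SIGMA a:A. {..<w - cyclic_gap d A a})" if j: "j \<in> double_hit_starts d A w" for j
  proof -
    from j obtain x y where xy: "x < y" "y < w" "(j + x) mod d \<in> A" "(j + y) mod d \<in> A"
      unfolding double_hit_starts_def by auto
    have first: "first j < w" "(j + first j) mod d \<in> A" "first j \<le> x"
      using xy unfolding first_def by (auto intro: LeastI2[of _ x] Least_le)
    let ?a = "(j + first j) mod d"
    have "(?a + (y - first j)) mod d = (j + first j + (y - first j)) mod d"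
      by (rule mod_add_left_eq)
    also have "\<dots> = (j + y) mod d" using first(3) xy(1) by simp
    finally have "(?a + (y - first j)) mod d = (j + y) mod d" .
    then have "cyclic_gap d A ?a \<le> y - first j"
      using cyclic_gap_le[of "y - first j" ?a d A] first(3) xy by simp
    then show ?thesis using first xy unfolding pos_def by auto
  qed
  have "inj_on pos (double_hit_starts d A w)"
  proof (rule inj_onI)
    fix x y assume "x \<in> double_hit_starts d A w" "y \<in> double_hit_starts d A w" "pos x = pos y"
    then show "x = y"
      using mod_add_right_cancel_less[of x d y "first x"] unfolding pos_def double_hit_starts_def by auto
  qed
  then have "card (double_hit_starts d A w) \<le> card (SIGMA a:A. {..<w - cyclic_gap d A a})"
    using finA pos by (intro card_inj_on_le) blast+
  also have "\<dots> = (\<Sum>a\<in>A. w - cyclic_gap d A a)" using finA by (simp add: card_SigmaI)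
  finally show ?thesis .
qed

lemma sum_cyclic_gaps_ge:
  assumes A: "A \<subseteq> {..<d}" "A \<noteq> {}"
  shows "d \<le> (\<Sum>a\<in>A. cyclic_gap d A a)"
proof -
  have finA: "finite A" using A finite_subset by blast
  have "{..<d} \<subseteq> (\<Union>a\<in>A. (\<lambda>k. (a + k) mod d) ` {..<cyclic_gap d A a})"
  proof
    fix x assume x: "x \<in> {..<d}"
    obtain a0 where a0: "a0 \<in> A" using A(2) by blast
    then have "(a0 + (x + d - a0)) mod d = x" using x A(1) by auto
    then have ex: "\<exists>a\<in>A. (a + (x + d - a0)) mod d = x" using a0 by blast
    define k where "k = (LEAST k. \<exists>a\<in>A. (a + k) mod d = x)"
    have "\<exists>a\<in>A. (a + k) mod d = x" unfolding k_def by (rule LeastI_ex) (use ex in blast)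
    then obtain a where a: "a \<in> A" "(a + k) mod d = x" by blast
    have k_least: "k \<le> k'" if "a' \<in> A" "(a' + k') mod d = x" for a' k'
      unfolding k_def using that by (auto intro: Least_le)
    have "k < cyclic_gap d A a"
    proof (rule ccontr)
      assume not_less: "\<not> ?thesis"
      have "((a + cyclic_gap d A a) mod d + (k - cyclic_gap d A a)) mod d
          = (a + cyclic_gap d A a + (k - cyclic_gap d A a)) mod d"
        by (rule mod_add_left_eq)
      also have "\<dots> = x" using a(2) not_less by simp
      finally have "((a + cyclic_gap d A a) mod d + (k - cyclic_gap d A a)) mod d = x" .
      then have "k \<le> k - cyclic_gap d A a"
        using k_least cyclic_gap(2)[OF A(1) a(1)] by blast
      then show False using cyclic_gap(1)[OF A(1) a(1)] not_less by linarith
    qed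
    then show "x \<in> (\<Union>a\<in>A. (\<lambda>k. (a + k) mod d) ` {..<cyclic_gap d A a})" using a by auto
  qed
  then have "card {..<d} \<le> card (\<Union>a\<in>A. (\<lambda>k. (a + k) mod d) ` {..<cyclic_gap d A a})"
    using finA by (intro card_mono) auto
  also have "\<dots> \<le> (\<Sum>a\<in>A. card ((\<lambda>k. (a + k) mod d) ` {..<cyclic_gap d A a}))"
    using finA by (rule card_UN_le)
  also have "\<dots> \<le> (\<Sum>a\<in>A. cyclic_gap d A a)"
    by (rule sum_mono) (metis card_image_le card_lessThan finite_lessThan)
  finally show ?thesis by simp
qed

lemma le_pred_mult_pred:
  fixes c d m w :: nat
  assumes "c + d \<le> m * w" "c \<le> d" "1 \<le> m" "3 \<le> w" "3 * w \<le> d + 2"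
  shows "c \<le> (w - 1) * (m - 1)"
proof -
  have ints: "int c + int d \<le> int m * int w" "int c \<le> int d" "1 \<le> int m" "3 \<le> int w"
    "3 * int w \<le> int d + 2"
    using assms by (simp_all only: of_nat_add[symmetric] of_nat_mult[symmetric] of_nat_le_iff)
  have "int c \<le> (int w - 1) * (int m - 1)"
  proof (rule ccontr)
    assume too_many: "\<not> ?thesis"
    then have "int m - 1 \<ge> int d - int w + 1" using ints by (simp add: algebra_simps)
    then have "(int w - 1) * (int m - 1) \<ge> (int w - 1) * (int d - int w + 1)"
      using ints by (intro mult_left_mono) auto
    moreover have "(int w - 2) * int d \<ge> (int w - 2) * (3 * int w - 2)"
      using ints by (intro mult_left_mono) auto
    moreover have "0 \<le> int w * (int w - 3)" using ints by simp
    ultimately show False using too_many ints(1,2) by (simp add: algebra_simps)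
  qed
  moreover have "int ((w - 1) * (m - 1)) = (int w - 1) * (int m - 1)"
    using assms by (simp add: of_nat_diff)
  ultimately show ?thesis by linarith
qed

lemma card_double_hit_starts:
  assumes A: "A \<subseteq> {..<d}" and w: "3 \<le> w" "3 * w \<le> d + 2"
  shows "card (double_hit_starts d A w) \<le> (w - 1) * (card A - 1)"
proof (cases "A = {}")
  case True
  then show ?thesis unfolding double_hit_starts_def by simp
next
  assume nonempty: "A \<noteq> {}"
  have finA: "finite A" using A finite_subset by blast
  let ?gap = "cyclic_gap d A"
  let ?c = "card (double_hit_starts d A w)"
  note gap_pos = cyclic_gap(1)[OF A]
  txt \<open>If some gap is at least \<open>w\<close>, the element before it is never the first of two hits;
    otherwise the starts number at most \<open>|A| w - d\<close> and at most \<open>d\<close>.\<close>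
  show ?thesis
  proof (cases "\<exists>b\<in>A. w \<le> ?gap b")
    case True
    then obtain b where b: "b \<in> A" "w \<le> ?gap b" by auto
    have "?c \<le> (\<Sum>a\<in>A. w - ?gap a)"
      by (rule card_double_hit_starts_le_sum_gaps[OF A])
    also have "\<dots> = (\<Sum>a\<in>A-{b}. w - ?gap a)"
      using finA b by (simp add: sum.remove)
    also have "\<dots> \<le> (\<Sum>a\<in>A-{b}. w - 1)"
      by (rule sum_mono) (use gap_pos in fastforce)
    also have "\<dots> = (w - 1) * (card A - 1)" using b finA by simp
    finally show ?thesis .
  next
    case False
    then have "(\<Sum>a\<in>A. w - ?gap a + ?gap a) = (\<Sum>a\<in>A. w)"
      by (intro sum.cong) auto
    then have "(\<Sum>a\<in>A. w - ?gap a) + (\<Sum>a\<in>A. ?gap a) = (\<Sum>a\<in>A. w)"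
      by (simp add: sum.distrib)
    then have "?c + d \<le> card A * w"
      using card_double_hit_starts_le_sum_gaps[OF A, of w] sum_cyclic_gaps_ge[OF A nonempty] by simp
    moreover have "?c \<le> d"
      using card_mono[of "{..<d}" "double_hit_starts d A w"] unfolding double_hit_starts_def by auto
    moreover have "1 \<le> card A" using finA nonempty by (simp add: Suc_le_eq card_gt_0_iff)
    ultimately show ?thesis using w by (rule le_pred_mult_pred)
  qed
qed

definition cyclic_adj :: "nat \<Rightarrow> nat \<Rightarrow> nat \<Rightarrow> bool" where
  "cyclic_adj d v w \<longleftrightarrow> w = (v + 1) mod d \<or> v = (w + 1) mod d"

text \<open>A change of direction would make the walk return to the vertex it visited two steps
  earlier.\<close>

lemma cyclic_walk_direction:
  fixes p :: "nat \<Rightarrow> nat"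
  assumes step: "\<And>i. i + 1 < n \<Longrightarrow> cyclic_adj d (p i) (p (i + 1))"
    and inj: "inj_on p {..<n}" and bound: "\<And>i. i < n \<Longrightarrow> p i < d"
  shows "(\<forall>i. i + 1 < n \<longrightarrow> p (i + 1) = (p i + 1) mod d)
       \<or> (\<forall>i. i + 1 < n \<longrightarrow> p i = (p (i + 1) + 1) mod d)"
proof -
  let ?fw = "\<lambda>i. p (i + 1) = (p i + 1) mod d" and ?bw = "\<lambda>i. p i = (p (i + 1) + 1) mod d"
  have no_return: "p (i + 2) \<noteq> p i" if "i + 2 < n" for i
    using inj_onD[OF inj, of "i + 2" i] that by auto
  have fw_next: "?fw (i + 1)" if "i + 2 < n" "?fw i" for i
  proof (rule ccontr)
    assume "\<not> ?fw (i + 1)"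
    then have "(p (i + 2) + 1) mod d = (p i + 1) mod d"
      using step[of "i + 1"] that by (simp add: cyclic_adj_def numeral_2_eq_2)
    then show False
      using mod_add_right_cancel_less[of "p (i + 2)" d "p i" 1] bound no_return that(1) by simp
  qed
  have bw_next: "?bw (i + 1)" if "i + 2 < n" "?bw i" for i
  proof (rule ccontr)
    assume "\<not> ?bw (i + 1)"
    then have "p (i + 2) = p i"
      using step[of "i + 1"] that by (simp add: cyclic_adj_def numeral_2_eq_2)
    then show False using no_return that(1) by simp
  qed
  have propagate: "\<forall>i. i + 1 < n \<longrightarrow> P i"
    if "P 0" "\<And>i. i + 2 < n \<Longrightarrow> P i \<Longrightarrow> P (i + 1)" for P :: "nat \<Rightarrow> bool"
  proof (intro allI impI)
    fix i assume "i + 1 < n"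
    then show "P i" using that by (induction i) auto
  qed
  show ?thesis
  proof (cases "1 < n")
    case True
    then have "?fw 0 \<or> ?bw 0" using step[of 0] by (simp add: cyclic_adj_def)
    then show ?thesis using propagate[of ?fw] propagate[of ?bw] fw_next bw_next by blast
  qed auto
qed

lemma cyclic_walk_forward:
  fixes p :: "nat \<Rightarrow> nat"
  assumes "\<forall>i. i + 1 < n \<longrightarrow> p (i + 1) = (p i + 1) mod d" "p 0 < d" "k < n"
  shows "p k = (p 0 + k) mod d"
  using assms(3)
proof (induction k)
  case (Suc k)
  then have "p (Suc k) = ((p 0 + k) mod d + 1) mod d" using assms(1) by simp
  then show ?case by (simp add: mod_Suc_eq)
qed (use assms(2) in simp)

lemma cyclic_walk_interval:
  fixes p :: "nat \<Rightarrow> nat"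
  assumes step: "\<And>i. i + 1 < n \<Longrightarrow> cyclic_adj d (p i) (p (i + 1))"
    and inj: "inj_on p {..<n}" and bound: "\<And>i. i < n \<Longrightarrow> p i < d" and n: "0 < n"
  shows "\<exists>j<d. (\<forall>k<n. p k = (j + k) mod d) \<or> (\<forall>k<n. p k = (j + (n - 1 - k)) mod d)"
  using cyclic_walk_direction[OF step inj bound]
proof
  assume forward: "\<forall>i. i + 1 < n \<longrightarrow> p (i + 1) = (p i + 1) mod d"
  have "p k = (p 0 + k) mod d" if "k < n" for k
    using cyclic_walk_forward[OF forward bound[OF n] that] .
  then show ?thesis using bound[OF n] by blast
next
  assume backward: "\<forall>i. i + 1 < n \<longrightarrow> p i = (p (i + 1) + 1) mod d"
  define r where "r k = p (n - 1 - k)" for k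
  have "\<forall>k. k + 1 < n \<longrightarrow> r (k + 1) = (r k + 1) mod d"
  proof (intro allI impI)
    fix k assume k: "k + 1 < n"
    then have "n - 1 - (k + 1) + 1 = n - 1 - k" by simp
    then show "r (k + 1) = (r k + 1) mod d"
      using backward[rule_format, of "n - 1 - (k + 1)"] k unfolding r_def by simp
  qed
  moreover have "r 0 < d" using bound n unfolding r_def by simp
  ultimately have "p k = (p (n - 1) + (n - 1 - k)) mod d" if "k < n" for k
    using cyclic_walk_forward[of n r d "n - 1 - k"] that unfolding r_def by simp
  moreover have "p (n - 1) < d" using bound n by simp
  ultimately show ?thesis by blast
qed

lemma card_cyclic_neighbours: "card {w. w < d \<and> cyclic_adj d v w} \<le> 2"
proof -
  have "{w. w < d \<and> cyclic_adj d v w} \<subseteq> {(v + 1) mod d, (v + d - 1) mod d}"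
  proof
    fix w assume w: "w \<in> {w. w < d \<and> cyclic_adj d v w}"
    have "w = (v + d - 1) mod d" if "v = (w + 1) mod d"
      using that w by (cases "w + 1 = d") (auto simp: mod_if)
    then show "w \<in> {(v + 1) mod d, (v + d - 1) mod d}" using w unfolding cyclic_adj_def by auto
  qed
  then have "card {w. w < d \<and> cyclic_adj d v w} \<le> card {(v + 1) mod d, (v + d - 1) mod d}"
    by (intro card_mono) auto
  also have "\<dots> \<le> 2" by (simp add: card_insert_le_m1)
  finally show ?thesis .
qed

lemma cyclic_adj_no_triangle:
  assumes "4 \<le> d" "u < d" "v < d" "w < d" "u \<noteq> w"
    and "cyclic_adj d v u" "cyclic_adj d v w" "cyclic_adj d u w"
  shows False
  using assms unfolding cyclic_adj_def by (auto simp: mod_if split: if_splits)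

section \<open>The hubbed wheel and its windows\<close>

definition spoke :: "nat \<Rightarrow> nat \<Rightarrow> (nat + nat) set" where
  "spoke a i = {Inl a, Inr i}"

definition rim :: "nat \<Rightarrow> nat \<Rightarrow> (nat + nat) set" where
  "rim d i = {Inr i, Inr ((i + 1) mod d)}"

lemma hubbed_wheel_eq: "hubbed_wheel d s = {spoke a i | a i. a < s \<and> i < d} \<union> rim d ` {..<d}"
  unfolding hubbed_wheel_def spoke_def rim_def by auto

lemma spoke_ne_rim [simp]: "spoke a i \<noteq> rim d k" "rim d k \<noteq> spoke a i"
  unfolding spoke_def rim_def by auto

lemma spoke_eq_iff [simp]: "spoke a i = spoke b k \<longleftrightarrow> a = b \<and> i = k"
  unfolding spoke_def by (auto simp: doubleton_eq_iff)

lemma rim_eq_iff: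
  assumes "3 \<le> d" "i < d" "k < d"
  shows "rim d i = rim d k \<longleftrightarrow> i = k"
proof
  assume "rim d i = rim d k"
  then have "i = k \<or> (i = (k + 1) mod d \<and> (i + 1) mod d = k)"
    unfolding rim_def by (auto simp: doubleton_eq_iff)
  then show "i = k" using assms by (auto simp: mod_if split: if_splits)
qed simp

lemma finite_hubbed_wheel [simp]: "finite (hubbed_wheel d s)"
proof -
  have "hubbed_wheel d s = (\<lambda>(a, i). spoke a i) ` ({..<s} \<times> {..<d}) \<union> rim d ` {..<d}"
    unfolding hubbed_wheel_eq by auto
  then show ?thesis by simp
qed

definition rim_indices :: "nat \<Rightarrow> (nat + nat) set set \<Rightarrow> nat set" where
  "rim_indices d C = {i. i < d \<and> rim d i \<in> C}"

definition spoke_indices :: "nat \<Rightarrow> (nat + nat) set set \<Rightarrow> nat \<Rightarrow> nat set" where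
  "spoke_indices d C a = {i. i < d \<and> spoke a i \<in> C}"

lemma finite_rim_indices [simp]: "finite (rim_indices d C)"
  unfolding rim_indices_def by simp

lemma finite_spoke_indices [simp]: "finite (spoke_indices d C a)"
  unfolding spoke_indices_def by simp

lemma card_subset_hubbed_wheel:
  assumes d: "3 \<le> d" and C: "C \<subseteq> hubbed_wheel d s"
  shows "card C = card (rim_indices d C) + (\<Sum>a<s. card (spoke_indices d C a))"
proof -
  let ?rims = "rim d ` rim_indices d C" and ?spokes = "\<Union>a<s. spoke a ` spoke_indices d C a"
  have "C \<subseteq> ?rims \<union> ?spokes"
  proof
    fix e assume "e \<in> C"
    then show "e \<in> ?rims \<union> ?spokes"
      using C unfolding hubbed_wheel_eq rim_indices_def spoke_indices_def by blast
  qed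
  then have "C = ?rims \<union> ?spokes"
    unfolding rim_indices_def spoke_indices_def by auto
  moreover have "card (?rims \<union> ?spokes) = card ?rims + card ?spokes"
    by (rule card_Un_disjoint) auto
  moreover have "card ?rims = card (rim_indices d C)"
    by (rule card_image) (use rim_eq_iff[OF d] in \<open>auto simp: inj_on_def rim_indices_def\<close>)
  moreover have "card ?spokes = (\<Sum>a<s. card (spoke_indices d C a))"
    by (subst card_UN_disjoint) (auto simp: card_image inj_on_def)
  ultimately show ?thesis by simp
qed

lemma card_hubbed_wheel:
  assumes "3 \<le> d"
  shows "card (hubbed_wheel d s) = (s + 1) * d"
proof -
  have "rim_indices d (hubbed_wheel d s) = {..<d}"
    unfolding rim_indices_def hubbed_wheel_eq by auto
  moreover have "spoke_indices d (hubbed_wheel d s) a = {..<d}" if "a < s" for a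
    using that unfolding rim_indices_def spoke_indices_def hubbed_wheel_eq by auto
  ultimately show ?thesis
    using card_subset_hubbed_wheel[OF assms, of "hubbed_wheel d s" s] by simp
qed

definition window :: "nat \<Rightarrow> nat \<Rightarrow> nat \<Rightarrow> nat \<Rightarrow> (nat + nat) set set" where
  "window d T a j =
     (\<lambda>i. spoke a ((j + i) mod d)) ` {..T} \<union> (\<lambda>i. rim d ((j + i) mod d)) ` {..<T}"

lemma window_subset_hubbed_wheel: "a < s \<Longrightarrow> 0 < d \<Longrightarrow> window d T a j \<subseteq> hubbed_wheel d s"
  unfolding window_def hubbed_wheel_eq by auto

lemma hubbed_wheel_hub_edge: "{Inl a, y} \<in> hubbed_wheel d s \<Longrightarrow> a < s \<and> (\<exists>i<d. y = Inr i)"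
  unfolding hubbed_wheel_def by (auto simp: doubleton_eq_iff)

lemma hubbed_wheel_rim_edge:
  "{Inr v, y} \<in> hubbed_wheel d s \<Longrightarrow>
     v < d \<and> ((\<exists>b<s. y = Inl b) \<or> (\<exists>w<d. y = Inr w \<and> cyclic_adj d v w))"
  unfolding hubbed_wheel_def cyclic_adj_def by (auto simp: doubleton_eq_iff)

lemma spoke_in_window: "k \<le> T \<Longrightarrow> spoke a ((j + k) mod d) \<in> window d T a j"
  unfolding window_def by (intro UnI1 image_eqI[of _ _ k]) auto

lemma rim_in_window: "k < T \<Longrightarrow> rim d ((j + k) mod d) \<in> window d T a j"
  unfolding window_def by (intro UnI2 image_eqI[of _ _ k]) auto

section \<open>Colour classes spoil few windows\<close>

definition spoiled_starts :: "nat \<Rightarrow> nat \<Rightarrow> nat \<Rightarrow> (nat + nat) set set \<Rightarrow> nat set" where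
  "spoiled_starts d T a C =
     {j. j < d \<and> (\<exists>e1\<in>window d T a j \<inter> C. \<exists>e2\<in>window d T a j \<inter> C. e1 \<noteq> e2)}"

lemma finite_spoiled_starts [simp]: "finite (spoiled_starts d T a C)"
  unfolding spoiled_starts_def by simp

lemma spoiled_starts_subset_lessThan: "spoiled_starts d T a C \<subseteq> {..<d}"
  unfolding spoiled_starts_def by auto

lemma spoiled_starts_subset:
  fixes C :: "(nat + nat) set set" and a :: nat
  assumes "0 < d"
  defines "R \<equiv> rim_indices d C" and "S \<equiv> spoke_indices d C a"
  shows "spoiled_starts d T a C \<subseteq> double_hit_starts d R T \<union> double_hit_starts d S (Suc T)
           \<union> (hit_starts d S (Suc T) \<inter> hit_starts d R T)"
proof
  fix j assume "j \<in> spoiled_starts d T a C"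
  then obtain e1 e2 where j: "j < d"
    and e: "e1 \<in> window d T a j \<inter> C" "e2 \<in> window d T a j \<inter> C" "e1 \<noteq> e2"
    unfolding spoiled_starts_def by auto
  have classify: "(\<exists>i<Suc T. (j + i) mod d \<in> S \<and> e = spoke a ((j + i) mod d))
      \<or> (\<exists>i<T. (j + i) mod d \<in> R \<and> e = rim d ((j + i) mod d))"
    if "e \<in> window d T a j \<inter> C" for e
    using that assms(1) unfolding window_def R_def S_def rim_indices_def spoke_indices_def
    by (auto simp: less_Suc_eq_le)
  from classify[OF e(1)] classify[OF e(2)] consider
      (spokes) i1 i2 where "i1 < Suc T" "i2 < Suc T" "(j + i1) mod d \<in> S" "(j + i2) mod d \<in> S"
        "e1 = spoke a ((j + i1) mod d)" "e2 = spoke a ((j + i2) mod d)"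
    | (rims) i1 i2 where "i1 < T" "i2 < T" "(j + i1) mod d \<in> R" "(j + i2) mod d \<in> R"
        "e1 = rim d ((j + i1) mod d)" "e2 = rim d ((j + i2) mod d)"
    | (mixed) i1 i2 where "i1 < Suc T" "i2 < T" "(j + i1) mod d \<in> S" "(j + i2) mod d \<in> R"
    by blast
  then show "j \<in> double_hit_starts d R T \<union> double_hit_starts d S (Suc T)
           \<union> (hit_starts d S (Suc T) \<inter> hit_starts d R T)"
  proof cases
    case spokes
    then have "i1 \<noteq> i2" using e(3) by auto
    with spokes j show ?thesis by (blast intro: double_hit_startsI)
  next
    case rims
    then have "i1 \<noteq> i2" using e(3) by auto
    with rims j show ?thesis by (blast intro: double_hit_startsI)
  next
    case mixed
    with j show ?thesis unfolding hit_starts_def by blast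
  qed
qed

lemma card_spoiled_starts_le:
  assumes T: "2 \<le> T" "3 * T + 1 \<le> d"
  shows "card (spoiled_starts d T a C)
           \<le> T * (card (rim_indices d C) + card (spoke_indices d C a) - 1)"
proof -
  let ?R = "rim_indices d C" and ?S = "spoke_indices d C a"
  have sub: "?R \<subseteq> {..<d}" "?S \<subseteq> {..<d}"
    unfolding rim_indices_def spoke_indices_def by auto
  have double: "card (double_hit_starts d A (Suc T)) \<le> T * (card A - 1)" if "A \<subseteq> {..<d}" for A
    using card_double_hit_starts[OF that, of "Suc T"] T by simp
  note covered = spoiled_starts_subset[where C = C and a = a and d = d and T = T]
  show ?thesis
  proof (cases "?S = {}")
    case True
    then have "spoiled_starts d T a C \<subseteq> double_hit_starts d ?R (Suc T)"
      using covered double_hit_starts_mono[of T "Suc T" d ?R] T by auto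
    then have "card (spoiled_starts d T a C) \<le> card (double_hit_starts d ?R (Suc T))"
      by (intro card_mono) auto
    then show ?thesis using double[OF sub(1)] True by simp
  next
    case False
    then have "1 \<le> card ?S" by (simp add: Suc_le_eq card_gt_0_iff)
    have "spoiled_starts d T a C \<subseteq> double_hit_starts d ?S (Suc T) \<union> hit_starts d ?R T"
      using covered double_hit_starts_subset_hit_starts[of d ?R T] T by auto
    then have "card (spoiled_starts d T a C)
        \<le> card (double_hit_starts d ?S (Suc T) \<union> hit_starts d ?R T)"
      by (intro card_mono) auto
    also have "\<dots> \<le> card (double_hit_starts d ?S (Suc T)) + card (hit_starts d ?R T)"
      by (rule card_Un_le)
    also have "\<dots> \<le> T * (card ?S - 1) + T * card ?R"
      using double[OF sub(2)] card_hit_starts[of ?R d T] by simp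
    also have "\<dots> = T * (card ?R + card ?S - 1)"
      using \<open>1 \<le> card ?S\<close> by (simp add: algebra_simps)
    finally show ?thesis .
  qed
qed

lemma card_spoiled_starts_le_rim_weighted:
  assumes T: "3 \<le> T" "3 * T + 1 \<le> d"
  shows "card (spoiled_starts d T a C)
           \<le> (T - 1) * (card (rim_indices d C) - 1) + (T + 1) * card (spoke_indices d C a)"
proof -
  let ?R = "rim_indices d C" and ?S = "spoke_indices d C a"
  have "?R \<subseteq> {..<d}" unfolding rim_indices_def by auto
  have "spoiled_starts d T a C \<subseteq> double_hit_starts d ?R T \<union> hit_starts d ?S (Suc T)"
    using spoiled_starts_subset[where C = C and a = a and d = d and T = T]
      double_hit_starts_subset_hit_starts[of d ?S "Suc T"] T
    by auto
  then have "card (spoiled_starts d T a C)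
      \<le> card (double_hit_starts d ?R T \<union> hit_starts d ?S (Suc T))"
    by (intro card_mono) auto
  also have "\<dots> \<le> card (double_hit_starts d ?R T) + card (hit_starts d ?S (Suc T))"
    by (rule card_Un_le)
  also have "\<dots> \<le> (T - 1) * (card ?R - 1) + (T + 1) * card ?S"
    using card_double_hit_starts[OF \<open>?R \<subseteq> {..<d}\<close>, of T] card_hit_starts[of ?S d "Suc T"] T
    by simp
  finally show ?thesis .
qed

definition spacing :: "nat \<Rightarrow> nat \<Rightarrow> nat" where
  "spacing s T = (if s = 1 then T else T - 1)"

lemma sum_diff1_le_diff1_sum:
  fixes f :: "'a \<Rightarrow> nat"
  assumes "finite I" "i \<in> I" "1 \<le> f i"
  shows "(\<Sum>a\<in>I. f a - 1) \<le> (\<Sum>a\<in>I. f a) - 1"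
proof -
  have "(\<Sum>a\<in>I. f a - 1) = (f i - 1) + (\<Sum>a\<in>I-{i}. f a - 1)"
    using assms by (simp add: sum.remove)
  also have "\<dots> \<le> (f i - 1) + (\<Sum>a\<in>I-{i}. f a)"
    by (intro add_left_mono sum_mono) auto
  also have "\<dots> = (\<Sum>a\<in>I. f a) - 1"
    using assms by (simp add: sum.remove)
  finally show ?thesis .
qed

lemma sum_card_spoiled_starts_le_without_rims:
  assumes T: "2 \<le> T" "3 * T + 1 \<le> d"
    and C: "C \<subseteq> hubbed_wheel d s" "C \<noteq> {}" "rim_indices d C = {}"
  shows "(\<Sum>a<s. card (spoiled_starts d T a C)) \<le> T * (card C - 1)"
proof -
  let ?S = "spoke_indices d C"
  have card_C: "card C = (\<Sum>a<s. card (?S a))"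
    using card_subset_hubbed_wheel[OF _ C(1)] T C(3) by simp
  moreover have "card C \<noteq> 0" using C(1,2) finite_subset by fastforce
  ultimately have "\<exists>a0<s. 1 \<le> card (?S a0)"
    by (metis lessThan_iff not_less_eq_eq One_nat_def le_zero_eq sum.neutral)
  then obtain a0 where a0: "a0 < s" "1 \<le> card (?S a0)" by blast
  have "(\<Sum>a<s. card (spoiled_starts d T a C)) \<le> (\<Sum>a<s. T * (card (?S a) - 1))"
    by (rule sum_mono) (use card_spoiled_starts_le[OF T, where C = C] C(3) in simp)
  also have "\<dots> = T * (\<Sum>a<s. card (?S a) - 1)" by (simp add: sum_distrib_left)
  also have "\<dots> \<le> T * (card C - 1)"
    using sum_diff1_le_diff1_sum[of "{..<s}" a0] a0 card_C by simp
  finally show ?thesis .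
qed

lemma sum_card_spoiled_starts_le_with_rims:
  assumes s: "2 \<le> s" and T: "3 \<le> T" "3 * T + 1 \<le> d"
    and C: "C \<subseteq> hubbed_wheel d s" "rim_indices d C \<noteq> {}"
  shows "(\<Sum>a<s. card (spoiled_starts d T a C)) \<le> s * (T - 1) * (card C - 1)"
proof -
  let ?R = "rim_indices d C" and ?S = "spoke_indices d C"
  have "1 \<le> card ?R" using C(2) by (simp add: Suc_le_eq card_gt_0_iff)
  have "2 * (T - 1) \<le> s * (T - 1)" using s by (intro mult_right_mono) auto
  then have "T + 1 \<le> s * (T - 1)" using T by linarith
  have "(\<Sum>a<s. card (spoiled_starts d T a C))
      \<le> (\<Sum>a<s. (T - 1) * (card ?R - 1) + (T + 1) * card (?S a))"
    by (rule sum_mono) (rule card_spoiled_starts_le_rim_weighted[OF T])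
  also have "\<dots> = s * ((T - 1) * (card ?R - 1)) + (T + 1) * (\<Sum>a<s. card (?S a))"
    by (simp add: sum.distrib sum_distrib_left)
  also have "\<dots> \<le> s * ((T - 1) * (card ?R - 1)) + s * (T - 1) * (\<Sum>a<s. card (?S a))"
    using \<open>T + 1 \<le> s * (T - 1)\<close> by (intro add_left_mono mult_right_mono) auto
  also have "\<dots> = s * (T - 1) * (card ?R - 1 + (\<Sum>a<s. card (?S a)))"
    by (simp only: distrib_left mult.assoc)
  also have "card ?R - 1 + (\<Sum>a<s. card (?S a)) = card C - 1"
    using card_subset_hubbed_wheel[OF _ C(1)] T \<open>1 \<le> card ?R\<close> by simp
  finally show ?thesis .
qed

lemma sum_card_spoiled_starts_le:
  assumes s: "1 \<le> s" and T: "2 \<le> T" "3 * T + 1 \<le> d" "2 \<le> s \<Longrightarrow> 3 \<le> T"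
    and C: "C \<subseteq> hubbed_wheel d s" "C \<noteq> {}"
  shows "(\<Sum>a<s. card (spoiled_starts d T a C)) \<le> s * spacing s T * (card C - 1)"
proof (cases "s = 1")
  case True
  then show ?thesis
    using card_spoiled_starts_le[OF T(1,2), of 0 C] card_subset_hubbed_wheel[OF _ C(1)] T
    by (simp add: spacing_def)
next
  case False
  then have s2: "2 \<le> s" and T3: "3 \<le> T" using s T(3) by auto
  show ?thesis
  proof (cases "rim_indices d C = {}")
    case True
    have "T \<le> s * (T - 1)"
    proof -
      have "2 * (T - 1) \<le> s * (T - 1)" using s2 by (intro mult_right_mono) auto
      then show ?thesis using T3 by linarith
    qed
    have "(\<Sum>a<s. card (spoiled_starts d T a C)) \<le> T * (card C - 1)"
      by (rule sum_card_spoiled_starts_le_without_rims[OF T(1,2) C True])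
    also have "\<dots> \<le> s * (T - 1) * (card C - 1)"
      by (rule mult_right_mono) (use \<open>T \<le> s * (T - 1)\<close> in simp_all)
    finally show ?thesis using \<open>s \<noteq> 1\<close> by (simp add: spacing_def)
  next
    case False
    then show ?thesis
      using sum_card_spoiled_starts_le_with_rims[OF s2 T3 T(2) C(1)] \<open>s \<noteq> 1\<close>
      by (simp add: spacing_def)
  qed
qed

lemma sum_card_fibres_diff1:
  assumes "finite E"
  shows "(\<Sum>k\<in>c ` E. card {e \<in> E. c e = k} - 1) = card E - card (c ` E)"
proof -
  have nonempty: "1 \<le> card {e \<in> E. c e = k}" if "k \<in> c ` E" for k
    using that assms by (auto simp: Suc_le_eq card_gt_0_iff)
  have "card E = card (\<Union>k\<in>c ` E. {e \<in> E. c e = k})" by (rule arg_cong[of _ _ card]) auto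
  also have "\<dots> = (\<Sum>k\<in>c ` E. card {e \<in> E. c e = k})"
    using assms by (intro card_UN_disjoint) auto
  also have "\<dots> = (\<Sum>k\<in>c ` E. (card {e \<in> E. c e = k} - 1) + 1)"
    using nonempty by (intro sum.cong) fastforce+
  also have "\<dots> = (\<Sum>k\<in>c ` E. card {e \<in> E. c e = k} - 1) + card (c ` E)"
    by (simp only: sum.distrib card_eq_sum[symmetric])
  finally show ?thesis by simp
qed

text \<open>Double counting of the pairs (window, colour) such that the window contains two edges
  of that colour.\<close>

lemma no_rainbow_window_colour_bound:
  assumes s: "1 \<le> s" and T: "2 \<le> T" "3 * T + 1 \<le> d" "2 \<le> s \<Longrightarrow> 3 \<le> T"
    and no_rainbow: "\<And>a j. a < s \<Longrightarrow> j < d \<Longrightarrow> \<not> inj_on c (window d T a j)"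
  shows "d \<le> spacing s T * (card (hubbed_wheel d s) - card (c ` hubbed_wheel d s))"
proof -
  let ?E = "hubbed_wheel d s" and ?K = "c ` hubbed_wheel d s" and ?W = "spacing s T"
  let ?starts = "{..<s} \<times> {..<d}"
  define colour_class where "colour_class k = {e \<in> ?E. c e = k}" for k
  define spoils where "spoils p k \<longleftrightarrow> snd p \<in> spoiled_starts d T (fst p) (colour_class k)" for p k
  have spoiled: "1 \<le> card {k \<in> ?K. spoils p k}" if p: "p \<in> ?starts" for p
  proof -
    have ps: "fst p < s" "snd p < d" using p by auto
    obtain e1 e2 where e: "e1 \<in> window d T (fst p) (snd p)" "e2 \<in> window d T (fst p) (snd p)"
        "e1 \<noteq> e2" "c e1 = c e2"
      using no_rainbow[OF ps] unfolding inj_on_def by blast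
    moreover have "e1 \<in> ?E" "e2 \<in> ?E"
      using e window_subset_hubbed_wheel[of "fst p" s d T "snd p"] p T by auto
    ultimately have "c e1 \<in> {k \<in> ?K. spoils p k}"
      using p unfolding spoils_def spoiled_starts_def colour_class_def by auto
    then have "{k \<in> ?K. spoils p k} \<noteq> {}" by blast
    then show ?thesis by (simp add: Suc_le_eq card_gt_0_iff)
  qed
  have "s * d = (\<Sum>p\<in>?starts. 1)" by simp
  also have "\<dots> \<le> (\<Sum>p\<in>?starts. card {k \<in> ?K. spoils p k})"
    using spoiled by (rule sum_mono)
  also have "\<dots> = (\<Sum>k\<in>?K. card {p \<in> ?starts. spoils p k})"
    by (rule sum_multicount_gen) auto
  also have "\<dots> = (\<Sum>k\<in>?K. \<Sum>a<s. card (spoiled_starts d T a (colour_class k)))"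
  proof (rule sum.cong)
    fix k
    have "{p \<in> ?starts. spoils p k} = (SIGMA a:{..<s}. spoiled_starts d T a (colour_class k))"
      using spoiled_starts_subset_lessThan unfolding spoils_def by fastforce
    then show "card {p \<in> ?starts. spoils p k} = (\<Sum>a<s. card (spoiled_starts d T a (colour_class k)))"
      by (simp add: card_SigmaI)
  qed simp
  also have "\<dots> \<le> (\<Sum>k\<in>?K. s * ?W * (card (colour_class k) - 1))"
    by (rule sum_mono, rule sum_card_spoiled_starts_le[OF s T]) (auto simp: colour_class_def)
  also have "\<dots> = s * ?W * (card ?E - card ?K)"
    unfolding sum_distrib_left[symmetric] colour_class_def sum_card_fibres_diff1[OF finite_hubbed_wheel] ..
  finally have "s * d \<le> s * (?W * (card ?E - card ?K))" by (simp only: mult.assoc)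
  then show ?thesis using s mult_le_cancel1 by simp
qed

section \<open>Fans in the hubbed wheel\<close>

definition graph_embedding :: "'a set set \<Rightarrow> ('b \<Rightarrow> 'a) \<Rightarrow> 'b set \<Rightarrow> 'b set set \<Rightarrow> bool" where
  "graph_embedding EG f VH EH \<longleftrightarrow> inj_on f VH \<and> (\<forall>e\<in>EH. f ` e \<in> EG)"

lemma has_rainbow_copy_iff:
  assumes "\<forall>e\<in>EH. e \<subseteq> VH"
  shows "has_rainbow_copy EG c VH EH \<longleftrightarrow>
           (\<exists>f. graph_embedding EG f VH EH \<and> inj_on c ((`) f ` EH))"
proof -
  have "inj_on (\<lambda>e. c (f ` e)) EH \<longleftrightarrow> inj_on c ((`) f ` EH)" if "inj_on f VH" for f
  proof -
    have "inj_on ((`) f) EH" using inj_on_image_Pow[OF that] assms by (auto simp: inj_on_def)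
    then show ?thesis using comp_inj_on_iff[of "(`) f" EH c] by (simp add: comp_def)
  qed
  then show ?thesis unfolding has_rainbow_copy_def graph_embedding_def by blast
qed

lemma graph_embedding_compose:
  assumes f: "graph_embedding EG f VH EH"
    and \<sigma>: "graph_embedding EH \<sigma> VH EH" "\<sigma> ` VH \<subseteq> VH"
  shows "graph_embedding EG (f \<circ> \<sigma>) VH EH" "(`) (f \<circ> \<sigma>) ` EH \<subseteq> (`) f ` EH"
proof -
  have image: "(f \<circ> \<sigma>) ` e = f ` (\<sigma> ` e)" for e by (rule image_comp[symmetric])
  have "inj_on (f \<circ> \<sigma>) VH"
    using f \<sigma> unfolding graph_embedding_def by (blast intro: comp_inj_on inj_on_subset)
  then show "graph_embedding EG (f \<circ> \<sigma>) VH EH"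
    using f \<sigma>(1) unfolding graph_embedding_def image by blast
  show "(`) (f \<circ> \<sigma>) ` EH \<subseteq> (`) f ` EH"
    using \<sigma>(1) unfolding graph_embedding_def image by blast
qed

lemma fan_edges_subset: "e \<in> fan_edges t \<Longrightarrow> e \<subseteq> fan_vertices t"
  unfolding fan_edges_def fan_vertices_def by auto

lemma fan_edge_cases:
  assumes "e \<in> fan_edges t" "3 \<le> t"
  obtains (hub) i where "1 \<le> i" "i < t" "e = {0, i}"
        | (path) i where "1 \<le> i" "i + 1 < t" "e = {i, i + 1}"
proof -
  consider (cycle) i where "i < t" "e = {i, (i + 1) mod t}"
         | (chord) i where "2 \<le> i" "i + 2 \<le> t" "e = {0, i}"
    using assms(1) unfolding fan_edges_def by blast
  then show ?thesis
  proof cases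
    case cycle
    consider "i = 0" | "i + 1 = t" | "1 \<le> i" "i + 1 < t" using cycle(1) by linarith
    then show ?thesis
    proof cases
      case 1
      then show ?thesis using cycle assms(2) hub[of 1] by simp
    next
      case 2
      then show ?thesis using cycle assms(2) hub[of i] by (simp add: insert_commute)
    next
      case 3
      then show ?thesis using cycle path[of i] by simp
    qed
  next
    case chord
    then show ?thesis using hub[of i] by simp
  qed
qed

lemma fan_cycle_edge: "i < t \<Longrightarrow> {i, (i + 1) mod t} \<in> fan_edges t"
  unfolding fan_edges_def by blast

lemma fan_hub_edge: "1 \<le> i \<Longrightarrow> i < t \<Longrightarrow> {0, i} \<in> fan_edges t"
proof -
  assume i: "1 \<le> i" "i < t"
  consider "i = 1" | "i + 1 = t" | "2 \<le> i" "i + 2 \<le> t" using i by linarith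
  then show ?thesis
  proof cases
    case 1
    then show ?thesis using i fan_cycle_edge[of 0 t] by simp
  next
    case 2
    then show ?thesis using fan_cycle_edge[of i t] by (simp add: insert_commute)
  next
    case 3
    then show ?thesis unfolding fan_edges_def by blast
  qed
qed

lemma fan_path_edge: "i + 1 < t \<Longrightarrow> {i, i + 1} \<in> fan_edges t"
  using fan_cycle_edge[of i t] by simp

definition fan_at :: "nat \<Rightarrow> nat \<Rightarrow> nat \<Rightarrow> nat \<Rightarrow> nat + nat" where
  "fan_at d a j i = (if i = 0 then Inl a else Inr ((j + (i - 1)) mod d))"

lemma fan_at_edges:
  assumes "3 \<le> t"
  shows "(`) (fan_at d a j) ` fan_edges t = window d (t - 2) a j"
proof
  show "(`) (fan_at d a j) ` fan_edges t \<subseteq> window d (t - 2) a j"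
  proof
    fix x assume "x \<in> (`) (fan_at d a j) ` fan_edges t"
    then obtain e where e: "e \<in> fan_edges t" "x = fan_at d a j ` e" by blast
    from e(1) assms show "x \<in> window d (t - 2) a j"
    proof (cases rule: fan_edge_cases)
      case (hub i)
      then have "x = spoke a ((j + (i - 1)) mod d)"
        using e(2) unfolding fan_at_def spoke_def by auto
      then show ?thesis unfolding window_def using hub by (intro UnI1 image_eqI[of _ _ "i - 1"]) auto
    next
      case (path i)
      have "(j + i) mod d = ((j + (i - 1)) mod d + 1) mod d"
        using path(1) mod_add_left_eq[of "j + (i - 1)" d 1] by simp
      then have "x = rim d ((j + (i - 1)) mod d)"
        using e(2) path unfolding fan_at_def rim_def by auto
      then show ?thesis unfolding window_def using path by (intro UnI2 image_eqI[of _ _ "i - 1"]) auto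
    qed
  qed
next
  show "window d (t - 2) a j \<subseteq> (`) (fan_at d a j) ` fan_edges t"
  proof
    fix x assume "x \<in> window d (t - 2) a j"
    then consider (spoke) k where "k \<le> t - 2" "x = spoke a ((j + k) mod d)"
      | (rim) k where "k < t - 2" "x = rim d ((j + k) mod d)"
      unfolding window_def by blast
    then show "x \<in> (`) (fan_at d a j) ` fan_edges t"
    proof cases
      case spoke
      then have "x = fan_at d a j ` {0, k + 1}" unfolding fan_at_def spoke_def by auto
      moreover have "{0, k + 1} \<in> fan_edges t" using spoke assms by (intro fan_hub_edge) auto
      ultimately show ?thesis by blast
    next
      case rim
      have "(j + (k + 1)) mod d = ((j + k) mod d + 1) mod d"
        using mod_add_left_eq[of "j + k" d 1] by simp
      then have "x = fan_at d a j ` {k + 1, k + 1 + 1}" using rim unfolding fan_at_def rim_def by auto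
      moreover have "{k + 1, k + 1 + 1} \<in> fan_edges t" using rim by (intro fan_path_edge) auto
      ultimately show ?thesis by blast
    qed
  qed
qed

lemma graph_embedding_fan_at:
  assumes t: "3 \<le> t" "t \<le> d" and a: "a < s"
  shows "graph_embedding (hubbed_wheel d s) (fan_at d a j) (fan_vertices t) (fan_edges t)"
proof -
  have "inj_on (fan_at d a j) {..<t}"
  proof (rule inj_onI)
    fix x y assume xy: "x \<in> {..<t}" "y \<in> {..<t}" "fan_at d a j x = fan_at d a j y"
    show "x = y"
    proof (cases "x = 0 \<or> y = 0")
      case True
      then show ?thesis using xy unfolding fan_at_def by (auto split: if_splits)
    next
      case False
      then have "(x - 1 + j) mod d = (y - 1 + j) mod d"
        using xy unfolding fan_at_def by (simp add: add.commute)
      then have "x - 1 = y - 1" using mod_add_right_cancel_less[of "x - 1" d "y - 1" j] xy t by simp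
      then show ?thesis using False by linarith
    qed
  qed
  moreover have "fan_at d a j ` e \<in> hubbed_wheel d s" if "e \<in> fan_edges t" for e
    using that fan_at_edges[OF t(1), of d a j] window_subset_hubbed_wheel[OF a, of d "t - 2" j] t
    by auto
  ultimately show ?thesis unfolding graph_embedding_def fan_vertices_def by blast
qed

definition fan_reflect :: "nat \<Rightarrow> nat \<Rightarrow> nat" where
  "fan_reflect t i = (if i = 0 then 0 else t - i)"

lemma fan_reflect:
  assumes "3 \<le> t"
  shows "graph_embedding (fan_edges t) (fan_reflect t) (fan_vertices t) (fan_edges t)"
    and "fan_reflect t ` fan_vertices t \<subseteq> fan_vertices t"
proof -
  have "inj_on (fan_reflect t) {..<t}"
    by (rule inj_onI) (auto simp: fan_reflect_def split: if_splits)
  moreover have "fan_reflect t ` e \<in> fan_edges t" if "e \<in> fan_edges t" for e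
    using that assms
  proof (cases rule: fan_edge_cases)
    case (hub i)
    then show ?thesis using fan_hub_edge[of "t - i" t] by (simp add: fan_reflect_def insert_commute)
  next
    case (path i)
    then have "fan_reflect t ` e = {t - i - 1, t - i - 1 + 1}"
      by (auto simp: fan_reflect_def)
    then show ?thesis using fan_path_edge[of "t - i - 1" t] path by simp
  qed
  ultimately show "graph_embedding (fan_edges t) (fan_reflect t) (fan_vertices t) (fan_edges t)"
    unfolding graph_embedding_def fan_vertices_def by blast
  show "fan_reflect t ` fan_vertices t \<subseteq> fan_vertices t"
    unfolding fan_vertices_def fan_reflect_def by auto
qed

lemma fan_edge_images_cong:
  "(\<And>i. i < t \<Longrightarrow> f i = g i) \<Longrightarrow> (`) f ` fan_edges t = (`) g ` fan_edges t"
  using fan_edges_subset unfolding fan_vertices_def by (intro image_cong refl) (auto cong: image_cong)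

lemma hub_centred_rim_walk:
  assumes f: "graph_embedding (hubbed_wheel d s) f (fan_vertices t) (fan_edges t)"
    and f0: "f 0 = Inl a" and t: "2 \<le> t"
  shows "a < s \<and> (\<exists>q. (\<forall>k<t - 1. f (k + 1) = Inr (q k) \<and> q k < d) \<and> inj_on q {..<t - 1}
           \<and> (\<forall>k. k + 1 < t - 1 \<longrightarrow> cyclic_adj d (q k) (q (k + 1))))"
proof -
  have inj: "inj_on f {..<t}" and edges: "\<And>e. e \<in> fan_edges t \<Longrightarrow> f ` e \<in> hubbed_wheel d s"
    using f unfolding graph_embedding_def fan_vertices_def by auto
  have spoke: "a < s \<and> (\<exists>x<d. f i = Inr x)" if "1 \<le> i" "i < t" for i
    using edges[OF fan_hub_edge[OF that]] f0 hubbed_wheel_hub_edge[of a "f i" d s] by simp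
  define q where "q k = projr (f (k + 1))" for k
  have q: "f (k + 1) = Inr (q k) \<and> q k < d" if k: "k < t - 1" for k
  proof -
    have "1 \<le> k + 1" "k + 1 < t" using k by auto
    then obtain x where "x < d" "f (k + 1) = Inr x" using spoke by blast
    then show ?thesis unfolding q_def by simp
  qed
  moreover have "inj_on q {..<t - 1}"
  proof (rule inj_onI)
    fix x y assume xy: "x \<in> {..<t - 1}" "y \<in> {..<t - 1}" "q x = q y"
    then have "f (x + 1) = f (y + 1)" using q by simp
    then show "x = y" using inj_onD[OF inj] xy(1,2) by fastforce
  qed
  moreover have "cyclic_adj d (q k) (q (k + 1))" if "k + 1 < t - 1" for k
  proof -
    have "{Inr (q k), Inr (q (k + 1))} \<in> hubbed_wheel d s"
      using edges[OF fan_path_edge[of "k + 1" t]] q[of k] q[of "k + 1"] that by simp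
    then show ?thesis using hubbed_wheel_rim_edge by blast
  qed
  moreover have "a < s" using spoke[of 1] t by simp
  ultimately show ?thesis by blast
qed

lemma hub_centred_fan_embedding:
  assumes f: "graph_embedding (hubbed_wheel d s) f (fan_vertices t) (fan_edges t)"
    and t: "3 \<le> t" and f0: "f 0 = Inl a"
  shows "a < s \<and> (\<exists>j<d. window d (t - 2) a j \<subseteq> (`) f ` fan_edges t)"
proof -
  let ?n = "t - 1"
  obtain q where "a < s" and q: "\<forall>k<?n. f (k + 1) = Inr (q k) \<and> q k < d"
    and "inj_on q {..<?n}" "\<forall>k. k + 1 < ?n \<longrightarrow> cyclic_adj d (q k) (q (k + 1))"
    using hub_centred_rim_walk[OF f f0] t by auto
  then obtain j where "j < d"
    and j: "(\<forall>k<?n. q k = (j + k) mod d) \<or> (\<forall>k<?n. q k = (j + (?n - 1 - k)) mod d)"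
    using cyclic_walk_interval[of ?n d q] t by auto
  have "(\<forall>i<t. f i = fan_at d a j i) \<or> (\<forall>i<t. (f \<circ> fan_reflect t) i = fan_at d a j i)"
    using j
  proof
    assume forward: "\<forall>k<?n. q k = (j + k) mod d"
    have "f i = fan_at d a j i" if i: "i < t" for i
      using q[rule_format, of "i - 1"] forward[rule_format, of "i - 1"] i f0
      by (cases "i = 0") (auto simp: fan_at_def)
    then show ?thesis by blast
  next
    assume backward: "\<forall>k<?n. q k = (j + (?n - 1 - k)) mod d"
    have "(f \<circ> fan_reflect t) i = fan_at d a j i" if i: "i < t" for i
    proof (cases "i = 0")
      case False
      then have "?n - 1 - (t - i - 1) = i - 1" "t - i - 1 + 1 = t - i" "t - i - 1 < ?n"
        using i by auto
      then show ?thesis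
        using q[rule_format, of "t - i - 1"] backward[rule_format, of "t - i - 1"] False
        by (simp add: fan_at_def fan_reflect_def)
    qed (simp add: f0 fan_at_def fan_reflect_def)
    then show ?thesis by blast
  qed
  moreover have "(`) (f \<circ> fan_reflect t) ` fan_edges t \<subseteq> (`) f ` fan_edges t"
    using graph_embedding_compose(2)[OF f fan_reflect[OF t]] .
  ultimately obtain g where g: "\<forall>i<t. g i = fan_at d a j i" "(`) g ` fan_edges t \<subseteq> (`) f ` fan_edges t"
    by blast
  then have "window d (t - 2) a j \<subseteq> (`) f ` fan_edges t"
    using fan_edge_images_cong[of t g "fan_at d a j"] fan_at_edges[OF t] by simp
  then show ?thesis using \<open>a < s\<close> \<open>j < d\<close> by blast
qed

lemma rim_centred_fan_neighbour:
  assumes f: "graph_embedding (hubbed_wheel d s) f (fan_vertices t) (fan_edges t)"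
    and f0: "f 0 = Inr v" and i: "1 \<le> i" "i < t"
  shows "f i \<in> Inl ` {..<s} \<union> Inr ` {w. w < d \<and> cyclic_adj d v w}"
proof -
  have "{Inr v, f i} \<in> hubbed_wheel d s"
    using f fan_hub_edge[OF i] f0 unfolding graph_embedding_def by force
  then show ?thesis using hubbed_wheel_rim_edge[of v "f i" d s] by auto
qed

lemma rim_centred_fan_few_hubs:
  assumes f: "graph_embedding (hubbed_wheel d s) f (fan_vertices t) (fan_edges t)"
    and f0: "f 0 = Inr v"
  shows "t \<le> s + 3"
proof -
  let ?N = "{w. w < d \<and> cyclic_adj d v w}"
  have "{1..<t} \<subseteq> fan_vertices t" unfolding fan_vertices_def by auto
  then have "t - 1 = card (f ` {1..<t})"
    using f card_image[OF inj_on_subset] unfolding graph_embedding_def by fastforce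
  also have "\<dots> \<le> card (Inl ` {..<s} \<union> Inr ` ?N :: (nat + nat) set)"
  proof (rule card_mono)
    show "f ` {1..<t} \<subseteq> Inl ` {..<s} \<union> Inr ` ?N"
      using rim_centred_fan_neighbour[OF f f0] by (intro image_subsetI) auto
  qed simp
  also have "\<dots> \<le> card (Inl ` {..<s} :: (nat + nat) set) + card (Inr ` ?N :: (nat + nat) set)"
    by (rule card_Un_le)
  also have "\<dots> \<le> s + 2"
    using card_image_le[of "{..<s}" "Inl :: nat \<Rightarrow> nat + nat"]
      card_image_le[of ?N "Inr :: nat \<Rightarrow> nat + nat"] card_cyclic_neighbours[of d v]
    by simp
  finally show ?thesis by linarith
qed

lemma rim_centred_fan_short:
  assumes f: "graph_embedding (hubbed_wheel d s) f (fan_vertices t) (fan_edges t)"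
    and f0: "f 0 = Inr v"
  shows "t < 7"
proof (rule ccontr)
  txt \<open>Since hubs are not adjacent, each of the edges \<open>{1, 2}\<close>, \<open>{3, 4}\<close>, \<open>{5, 6}\<close> has an
    end mapped to a rim neighbour of the centre, which has only two.\<close>
  assume "\<not> t < 7"
  let ?N = "{w. w < d \<and> cyclic_adj d v w}"
  have inj: "inj_on f {..<t}" using f unfolding graph_embedding_def fan_vertices_def by simp
  have rim_in_pair: "\<exists>x w. (x = i \<or> x = i + 1) \<and> w \<in> ?N \<and> f x = Inr w"
    if "1 \<le> i" "i + 1 < t" for i
  proof -
    have "{f i, f (i + 1)} \<in> hubbed_wheel d s"
      using f fan_path_edge[of i t] that unfolding graph_embedding_def by force
    then have "f i \<notin> Inl ` {..<s} \<or> f (i + 1) \<notin> Inl ` {..<s}"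
      by (auto dest: hubbed_wheel_hub_edge)
    then show ?thesis using rim_centred_fan_neighbour[OF f f0, of i] rim_centred_fan_neighbour[OF f f0, of "i + 1"] that
      by fastforce
  qed
  have "\<exists>x w. (x = 1 \<or> x = 1 + 1) \<and> w \<in> ?N \<and> f x = Inr w"
    by (rule rim_in_pair) (use \<open>\<not> t < 7\<close> in simp_all)
  moreover have "\<exists>x w. (x = 3 \<or> x = 3 + 1) \<and> w \<in> ?N \<and> f x = Inr w"
    by (rule rim_in_pair) (use \<open>\<not> t < 7\<close> in simp_all)
  moreover have "\<exists>x w. (x = 5 \<or> x = 5 + 1) \<and> w \<in> ?N \<and> f x = Inr w"
    by (rule rim_in_pair) (use \<open>\<not> t < 7\<close> in simp_all)
  ultimately obtain x1 w1 x2 w2 x3 w3 where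
    1: "x1 = 1 \<or> x1 = 1 + 1" "w1 \<in> ?N" "f x1 = Inr w1" and
    2: "x2 = 3 \<or> x2 = 3 + 1" "w2 \<in> ?N" "f x2 = Inr w2" and
    3: "x3 = 5 \<or> x3 = 5 + 1" "w3 \<in> ?N" "f x3 = Inr w3"
    by blast
  have "w1 \<noteq> w2" "w1 \<noteq> w3" "w2 \<noteq> w3"
    using 1 2 3 \<open>\<not> t < 7\<close> inj_onD[OF inj, of x1 x2] inj_onD[OF inj, of x1 x3]
      inj_onD[OF inj, of x2 x3]
    by auto
  then have "3 = card {w1, w2, w3}" by simp
  also have "\<dots> \<le> card ?N" using 1 2 3 by (intro card_mono) auto
  finally show False using card_cyclic_neighbours[of d v] by simp
qed

text \<open>The automorphism of \<open>F\<^sub>4\<close> exchanging its two vertices of degree 3.\<close>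

definition fan_swap :: "nat \<Rightarrow> nat" where
  "fan_swap i = (if i = 0 then 2 else if i = 2 then 0 else i)"

lemma fan_swap:
  shows "graph_embedding (fan_edges 4) fan_swap (fan_vertices 4) (fan_edges 4)"
    and "fan_swap ` fan_vertices 4 \<subseteq> fan_vertices 4"
proof -
  have "3 \<le> (4::nat)" by simp
  have "inj_on fan_swap {..<4}"
    by (rule inj_onI) (auto simp: fan_swap_def split: if_splits)
  moreover have "fan_swap ` e \<in> fan_edges 4" if "e \<in> fan_edges 4" for e
    using that \<open>3 \<le> (4::nat)\<close>
  proof (cases rule: fan_edge_cases)
    case (hub i)
    then consider "e = {0, 1}" | "e = {0, 2}" | "e = {0, 3}" by fastforce
    then show ?thesis
    proof cases
      case 1
      then have "fan_swap ` e = {1, 1 + 1}" by (auto simp: fan_swap_def)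
      then show ?thesis using fan_path_edge[of 1 4] by simp
    next
      case 2
      then have "fan_swap ` e = {0, 2}" by (auto simp: fan_swap_def)
      then show ?thesis using fan_hub_edge[of 2 4] by simp
    next
      case 3
      then have "fan_swap ` e = {2, 2 + 1}" by (auto simp: fan_swap_def)
      then show ?thesis using fan_path_edge[of 2 4] by simp
    qed
  next
    case (path i)
    then consider "e = {1, 1 + 1}" | "e = {2, 2 + 1}" by fastforce
    then show ?thesis
    proof cases
      case 1
      then have "fan_swap ` e = {0, 1}" by (auto simp: fan_swap_def)
      then show ?thesis using fan_hub_edge[of 1 4] by simp
    next
      case 2
      then have "fan_swap ` e = {0, 3}" by (auto simp: fan_swap_def)
      then show ?thesis using fan_hub_edge[of 3 4] by simp
    qed
  qed
  ultimately show "graph_embedding (fan_edges 4) fan_swap (fan_vertices 4) (fan_edges 4)"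
    unfolding graph_embedding_def fan_vertices_def by blast
  show "fan_swap ` fan_vertices 4 \<subseteq> fan_vertices 4"
    unfolding fan_vertices_def fan_swap_def by auto
qed

lemma rim_centred_F4_embedding:
  assumes f: "graph_embedding (hubbed_wheel d 1) f (fan_vertices 4) (fan_edges 4)"
    and d: "4 \<le> d" and f0: "f 0 = Inr v"
  shows "f 2 = Inl 0"
proof (rule ccontr)
  txt \<open>Otherwise \<open>f 0\<close>, \<open>f 2\<close> and one of \<open>f 1\<close>, \<open>f 3\<close> form a triangle in the rim cycle.\<close>
  assume "f 2 \<noteq> Inl 0"
  have inj: "inj_on f {..<4}" and edges: "\<And>e. e \<in> fan_edges 4 \<Longrightarrow> f ` e \<in> hubbed_wheel d 1"
    using f unfolding graph_embedding_def fan_vertices_def by auto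
  have neighbour: "v < d \<and> (f i = Inl 0 \<or> (\<exists>w<d. f i = Inr w \<and> cyclic_adj d v w))"
    if "1 \<le> i" "i < 4" for i
    using edges[OF fan_hub_edge[OF that]] f0 hubbed_wheel_rim_edge[of v "f i" d 1] by auto
  obtain w where w: "w < d" "f 2 = Inr w" "cyclic_adj d v w"
    using neighbour[of 2] \<open>f 2 \<noteq> Inl 0\<close> by auto
  obtain x u where xu: "x = 1 \<or> x = 3" "u < d" "f x = Inr u" "cyclic_adj d v u"
  proof (cases "f 1 = Inl 0")
    case True
    then have "f 3 \<noteq> Inl 0" using inj_onD[OF inj, of 1 3] by auto
    then show ?thesis using neighbour[of 3] that[of 3] by auto
  next
    case False
    then show ?thesis using neighbour[of 1] that[of 1] by auto
  qed
  have "{f 1, f 2} \<in> hubbed_wheel d 1" "{f 2, f 3} \<in> hubbed_wheel d 1"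
    using edges[OF fan_path_edge[of 1 4, unfolded one_add_one]] edges[OF fan_path_edge[of 2 4]]
    by simp_all
  then have "{f x, f 2} \<in> hubbed_wheel d 1"
    using xu(1) by (auto simp: insert_commute)
  then have "cyclic_adj d u w" using xu(3) w(2) hubbed_wheel_rim_edge by force
  moreover have "u \<noteq> w" using inj_onD[OF inj, of x 2] xu w by auto
  ultimately show False
    using cyclic_adj_no_triangle[OF d xu(2) _ w(1)] neighbour[of 1] xu(4) w(3) by auto
qed

definition fan_case :: "nat \<Rightarrow> nat \<Rightarrow> bool" where
  "fan_case s t \<longleftrightarrow> (s = 1 \<and> 4 \<le> t) \<or> (s = 2 \<and> 6 \<le> t) \<or> (3 \<le> s \<and> 7 \<le> t)"

lemma fan_embedding_covers_window:
  assumes f: "graph_embedding (hubbed_wheel d s) f (fan_vertices t) (fan_edges t)"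
    and st: "fan_case s t" and d: "4 \<le> d"
  shows "\<exists>a<s. \<exists>j<d. window d (t - 2) a j \<subseteq> (`) f ` fan_edges t"
proof (cases "f 0")
  case (Inl a)
  moreover have "3 \<le> t" using st unfolding fan_case_def by auto
  ultimately show ?thesis using hub_centred_fan_embedding[OF f] by blast
next
  case (Inr v)
  show ?thesis
  proof (cases "s = 1 \<and> t = 4")
    case True
    then have f4: "graph_embedding (hubbed_wheel d 1) f (fan_vertices 4) (fan_edges 4)" using f by simp
    then have "f 2 = Inl 0" using rim_centred_F4_embedding[OF f4 d Inr] by simp
    then have "(f \<circ> fan_swap) 0 = Inl 0" by (simp add: fan_swap_def)
    then obtain j where j: "j < d" "window d 2 0 j \<subseteq> (`) (f \<circ> fan_swap) ` fan_edges 4"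
      using hub_centred_fan_embedding[OF graph_embedding_compose(1)[OF f4 fan_swap]] by force
    moreover have "(`) (f \<circ> fan_swap) ` fan_edges 4 \<subseteq> (`) f ` fan_edges 4"
      using graph_embedding_compose(2)[OF f4 fan_swap] .
    ultimately have "window d (t - 2) 0 j \<subseteq> (`) f ` fan_edges t" using True by simp
    then show ?thesis using True j(1) by auto
  next
    case False
    then have "s + 4 \<le> t \<or> 7 \<le> t" using st unfolding fan_case_def by auto
    then show ?thesis using rim_centred_fan_few_hubs[OF f Inr] rim_centred_fan_short[OF f Inr] by linarith
  qed
qed

lemma has_rainbow_fan_iff_rainbow_window:
  assumes st: "fan_case s t" and d: "4 \<le> d" "t \<le> d"
  shows "has_rainbow_copy (hubbed_wheel d s) c (fan_vertices t) (fan_edges t)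
           \<longleftrightarrow> (\<exists>a<s. \<exists>j<d. inj_on c (window d (t - 2) a j))"
proof -
  have t: "3 \<le> t" using st unfolding fan_case_def by auto
  have "(\<exists>f. graph_embedding (hubbed_wheel d s) f (fan_vertices t) (fan_edges t)
            \<and> inj_on c ((`) f ` fan_edges t))
        \<longleftrightarrow> (\<exists>a<s. \<exists>j<d. inj_on c (window d (t - 2) a j))"
  proof
    assume "\<exists>f. graph_embedding (hubbed_wheel d s) f (fan_vertices t) (fan_edges t)
                \<and> inj_on c ((`) f ` fan_edges t)"
    then show "\<exists>a<s. \<exists>j<d. inj_on c (window d (t - 2) a j)"
      using fan_embedding_covers_window[OF _ st d(1)] inj_on_subset by metis
  next
    assume "\<exists>a<s. \<exists>j<d. inj_on c (window d (t - 2) a j)"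
    then show "\<exists>f. graph_embedding (hubbed_wheel d s) f (fan_vertices t) (fan_edges t)
                \<and> inj_on c ((`) f ` fan_edges t)"
      using graph_embedding_fan_at[OF t d(2)] fan_at_edges[OF t] by metis
  qed
  then show ?thesis using has_rainbow_copy_iff[of "fan_edges t" "fan_vertices t"] fan_edges_subset
    by blast
qed

section \<open>Colourings without rainbow windows\<close>

lemma colouring_identifying_pairs:
  fixes E :: "'e set" and h k :: "'i \<Rightarrow> 'e"
  assumes E: "finite E" and h: "inj_on h P" "h ` P \<subseteq> E" and k: "k ` P \<subseteq> E - h ` P"
  shows "\<exists>c :: 'e \<Rightarrow> nat. card E - card P \<le> card (c ` E)
           \<and> (\<forall>p\<in>P. c (h p) = c (k p))"
proof -
  obtain f :: "'e \<Rightarrow> nat" where f: "inj_on f E"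
    using finite_imp_inj_to_nat_seg[OF E] by blast
  define c where "c e = f (if e \<in> h ` P then k (inv_into P h e) else e)" for e
  have "c (h p) = c (k p)" if p: "p \<in> P" for p
  proof -
    have "k p \<notin> h ` P" using k p by blast
    then show ?thesis using inv_into_f_f[OF h(1) p] p unfolding c_def by simp
  qed
  moreover have "card E - card P \<le> card (c ` E)"
  proof -
    have "card E - card P = card E - card (h ` P)" using card_image[OF h(1)] by simp
    also have "\<dots> \<le> card (E - h ` P)" by (rule diff_card_le_card_Diff[OF finite_subset[OF h(2) E]])
    also have "\<dots> = card (f ` (E - h ` P))"
      using card_image[OF inj_on_subset[OF f, of "E - h ` P"]] by auto
    also have "\<dots> = card (c ` (E - h ` P))"
      by (rule arg_cong[where f = card]) (auto simp: c_def)
    also have "\<dots> \<le> card (c ` E)" using E by (intro card_mono) auto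
    finally show ?thesis .
  qed
  ultimately show ?thesis by blast
qed

text \<open>Multiples of \<open>W\<close>, capped at \<open>d - 2\<close> so that the rim edge after a mark never wraps
  around.\<close>

definition marks :: "nat \<Rightarrow> nat \<Rightarrow> nat \<Rightarrow> nat set" where
  "marks d W q = (\<lambda>k. min (k * W) (d - 2)) ` {..<q}"

lemma card_marks_le: "card (marks d W q) \<le> q"
  unfolding marks_def using card_image_le[of "{..<q}"] by simp

lemma marks_le: "p \<in> marks d W q \<Longrightarrow> p \<le> d - 2"
  unfolding marks_def by auto

lemma marks_cover:
  assumes W: "2 \<le> W" "W + 2 \<le> d" and q: "d \<le> q * W" and j: "j < d"
  shows "\<exists>p\<in>marks d W q. \<exists>k<W. (j + k) mod d = p"
proof -
  have "0 < q" using q j by (cases q) auto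
  consider "j + W < d" | "j + W = d" | "d < j + W" by linarith
  then show ?thesis
  proof cases
    case 1
    let ?k = "(j + W - 1) div W"
    have k: "j \<le> ?k * W" "?k * W < j + W" using round_up_div[of W j] W(1) by simp_all
    have "?k < q"
    proof (rule ccontr)
      assume "\<not> ?k < q"
      then have "q * W \<le> ?k * W" by simp
      then show False using k q 1 by linarith
    qed
    moreover have "?k * W \<le> d - 2" using k 1 by linarith
    ultimately have "?k * W \<in> marks d W q"
      unfolding marks_def by (intro image_eqI[of _ _ ?k]) auto
    moreover have "(j + (?k * W - j)) mod d = ?k * W"
    proof -
      have "?k * W < d" using k(2) 1 by linarith
      then show ?thesis using k(1) by simp
    qed
    moreover have "?k * W - j < W" using k by linarith
    ultimately show ?thesis by blast
  next
    case 2
    let ?p = "min ((q - 1) * W) (d - 2)"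
    have "?p \<in> marks d W q" unfolding marks_def using \<open>0 < q\<close> by auto
    moreover have "(q - 1) * W = q * W - W" by (simp add: diff_mult_distrib)
    then have "j \<le> ?p" using 2 q W by auto
    moreover have "(j + (?p - j)) mod d = ?p" using \<open>j \<le> ?p\<close> W by simp
    ultimately show ?thesis using 2 W by (intro bexI exI[of _ "?p - j"]) auto
  next
    case 3
    have "0 \<in> marks d W q" unfolding marks_def using \<open>0 < q\<close> by force
    moreover have "(j + (d - j)) mod d = 0" using j by simp
    moreover have "d - j < W" using 3 j by linarith
    ultimately show ?thesis by (intro bexI[of _ 0] exI[of _ "d - j"] conjI) simp_all
  qed
qed

lemma marks_not_consecutive:
  assumes W: "3 \<le> W" and q: "(q - 1) * W < d" and p: "p \<in> marks d W q" "p + 1 \<in> marks d W q"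
  shows False
proof -
  obtain k1 k2 where k: "k1 < q" "p = min (k1 * W) (d - 2)" "k2 < q" "p + 1 = min (k2 * W) (d - 2)"
    using p unfolding marks_def by auto
  have "k2 * W \<le> (q - 1) * W" using k(3) by (intro mult_le_mono1) simp
  then have "k2 * W < d" using q by linarith
  then have "p = k1 * W" "k2 * W = p + 1 \<or> k2 * W = p + 2"
    using k by (auto simp: min_def split: if_splits)
  moreover have "k2 * W \<le> k1 * W \<or> k1 * W + W \<le> k2 * W"
  proof (cases "k2 \<le> k1")
    case False
    then have "Suc k1 * W \<le> k2 * W" by (intro mult_le_mono1) simp
    then show ?thesis by simp
  qed simp
  ultimately show False using W by linarith
qed

lemma colouring_without_rainbow_window_of_pairs:
  fixes h k :: "nat \<Rightarrow> (nat + nat) set"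
  assumes d: "3 \<le> d" and P: "card P \<le> q"
    and h: "inj_on h P" "h ` P \<subseteq> hubbed_wheel d s" and k: "k ` P \<subseteq> hubbed_wheel d s - h ` P"
    and cover: "\<And>a j. a < s \<Longrightarrow> j < d
                  \<Longrightarrow> \<exists>p\<in>P. h p \<in> window d T a j \<and> k p \<in> window d T a j"
  shows "\<exists>c :: (nat + nat) set \<Rightarrow> nat. (s + 1) * d - q \<le> card (c ` hubbed_wheel d s)
           \<and> (\<forall>a<s. \<forall>j<d. \<not> inj_on c (window d T a j))"
proof -
  obtain c :: "(nat + nat) set \<Rightarrow> nat"
    where c: "card (hubbed_wheel d s) - card P \<le> card (c ` hubbed_wheel d s)"
      "\<And>p. p \<in> P \<Longrightarrow> c (h p) = c (k p)"
    using colouring_identifying_pairs[OF finite_hubbed_wheel h k] by blast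
  have "\<not> inj_on c (window d T a j)" if aj: "a < s" "j < d" for a j
  proof
    assume inj: "inj_on c (window d T a j)"
    obtain p where p: "p \<in> P" "h p \<in> window d T a j" "k p \<in> window d T a j"
      using cover[OF aj] by blast
    then have "h p = k p" using inj_onD[OF inj c(2)[OF p(1)]] by blast
    then show False using k p(1) by blast
  qed
  moreover have "(s + 1) * d - q \<le> card (c ` hubbed_wheel d s)"
    using c(1) card_hubbed_wheel[OF d, of s] P by linarith
  ultimately show ?thesis by blast
qed

lemma colouring_without_rainbow_window_one_hub:
  assumes T: "2 \<le> T" "3 * T + 1 \<le> d" and q: "d \<le> q * T"
  shows "\<exists>c :: (nat + nat) set \<Rightarrow> nat. (1 + 1) * d - q \<le> card (c ` hubbed_wheel d 1)
           \<and> (\<forall>a<1. \<forall>j<d. \<not> inj_on c (window d T a j))"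
proof -
  let ?P = "marks d T q"
  have d3: "3 \<le> d" using T by linarith
  have "p < d" if "p \<in> ?P" for p using marks_le[OF that] T by simp
  then have sub: "spoke 0 ` ?P \<subseteq> hubbed_wheel d 1" "rim d ` ?P \<subseteq> hubbed_wheel d 1 - spoke 0 ` ?P"
    unfolding hubbed_wheel_eq by auto
  have "inj_on (spoke 0) ?P" by (simp add: inj_on_def)
  moreover have "\<exists>p\<in>?P. spoke 0 p \<in> window d T a j \<and> rim d p \<in> window d T a j"
    if "a < 1" "j < d" for a j
  proof -
    have "T + 2 \<le> d" using T by linarith
    then obtain p k where "p \<in> ?P" "k < T" "(j + k) mod d = p"
      using marks_cover[OF T(1) _ q \<open>j < d\<close>] by blast
    then show ?thesis using spoke_in_window[of k T 0 j d] rim_in_window[of k T d j 0] \<open>a < 1\<close> by auto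
  qed
  ultimately show ?thesis
    by (rule colouring_without_rainbow_window_of_pairs[OF d3 card_marks_le _ sub])
qed

lemma colouring_without_rainbow_window_many_hubs:
  assumes T: "4 \<le> T" "3 * T + 1 \<le> d" and q: "d \<le> q * (T - 1)" "(q - 1) * (T - 1) < d"
  shows "\<exists>c :: (nat + nat) set \<Rightarrow> nat. (s + 1) * d - q \<le> card (c ` hubbed_wheel d s)
           \<and> (\<forall>a<s. \<forall>j<d. \<not> inj_on c (window d T a j))"
proof -
  let ?P = "marks d (T - 1) q" and ?E = "hubbed_wheel d s"
  have d3: "3 \<le> d" using T by linarith
  have marks_less: "p + 1 < d" if "p \<in> ?P" for p using marks_le[OF that] T by simp
  have "inj_on (\<lambda>p. rim d (p + 1)) ?P"
  proof (rule inj_onI)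
    fix x y assume "x \<in> ?P" "y \<in> ?P" "rim d (x + 1) = rim d (y + 1)"
    then show "x = y" using rim_eq_iff[OF d3, of "x + 1" "y + 1"] marks_less by simp
  qed
  moreover have "(\<lambda>p. rim d (p + 1)) ` ?P \<subseteq> ?E" using marks_less unfolding hubbed_wheel_eq by auto
  moreover have "rim d ` ?P \<subseteq> ?E - (\<lambda>p. rim d (p + 1)) ` ?P"
  proof -
    have "rim d p \<noteq> rim d (p' + 1)" if "p \<in> ?P" "p' \<in> ?P" for p p'
    proof
      assume "rim d p = rim d (p' + 1)"
      moreover have "p < d" "p' + 1 < d" using marks_less[OF that(1)] marks_less[OF that(2)] by auto
      ultimately have "p = p' + 1" using rim_eq_iff[OF d3] by blast
      moreover have "3 \<le> T - 1" using T by simp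
      ultimately show False using marks_not_consecutive[OF _ q(2) that(2)] that(1) by blast
    qed
    then show ?thesis using marks_less unfolding hubbed_wheel_eq by fastforce
  qed
  moreover have "\<exists>p\<in>?P. rim d (p + 1) \<in> window d T a j \<and> rim d p \<in> window d T a j"
    if "a < s" "j < d" for a j
  proof -
    have "2 \<le> T - 1" "T - 1 + 2 \<le> d" using T by auto
    then obtain p k where p: "p \<in> ?P" "k < T - 1" "(j + k) mod d = p"
      using marks_cover[OF _ _ q(1) \<open>j < d\<close>] by blast
    have next_pos: "(j + (k + 1)) mod d = p + 1"
      using marks_less[OF p(1)] mod_add_left_eq[of "j + k" d 1] p(3) by simp
    have "rim d (p + 1) \<in> window d T a j" "rim d p \<in> window d T a j"
      using rim_in_window[of "k + 1" T d j a, unfolded next_pos] rim_in_window[of k T d j a] p by auto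
    then show ?thesis using p(1) by blast
  qed
  ultimately show ?thesis
    by (rule colouring_without_rainbow_window_of_pairs[OF d3 card_marks_le])
qed

section \<open>The rainbow number\<close>

lemma rainbow_number_eqI:
  fixes c0 :: "'a set \<Rightarrow> nat"
  assumes rainbow: "\<And>c :: 'a set \<Rightarrow> nat. m < card (c ` EG) \<Longrightarrow> has_rainbow_copy EG c VH EH"
    and c0: "m \<le> card (c0 ` EG)" "\<not> has_rainbow_copy EG c0 VH EH"
  shows "rainbow_number EG VH EH = m + 1"
  unfolding rainbow_number_def
proof (rule Least_equality)
  show "\<forall>c :: 'a set \<Rightarrow> nat. m + 1 \<le> card (c ` EG) \<longrightarrow> has_rainbow_copy EG c VH EH"
    using rainbow by auto
next
  fix k assume "\<forall>c :: 'a set \<Rightarrow> nat. k \<le> card (c ` EG) \<longrightarrow> has_rainbow_copy EG c VH EH"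
  then have "\<not> k \<le> card (c0 ` EG)" using c0(2) by blast
  then show "m + 1 \<le> k" using c0(1) by linarith
qed

lemma floor_of_nat_minus_divide:
  fixes M d W :: nat
  assumes "0 < W"
  shows "\<lfloor>real M - real d / real W\<rfloor> = int M - int ((d + W - 1) div W)"
proof (rule floor_unique)
  let ?q = "(d + W - 1) div W"
  have "real d \<le> real ?q * real W" "real ?q * real W < real d + real W"
    using round_up_div[OF assms, of d]
    by (simp_all only: of_nat_mult[symmetric] of_nat_add[symmetric] of_nat_le_iff of_nat_less_iff)
  then have "real d / real W \<le> real ?q" "real ?q - 1 < real d / real W"
    using assms by (simp_all add: field_simps)
  then show "real_of_int (int M - int ?q) \<le> real M - real d / real W"
    and "real M - real d / real W < real_of_int (int M - int ?q) + 1"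
    by simp_all
qed

lemma rainbow_number_hubbed_wheel_fan:
  assumes st: "fan_case s t" and dt: "3 * t \<le> d + 5"
  defines "W \<equiv> spacing s (t - 2)"
  shows "rainbow_number (hubbed_wheel d s) (fan_vertices t) (fan_edges t)
           = (s + 1) * d - (d + W - 1) div W + 1"
proof -
  define T where "T = t - 2"
  define q where "q = (d + W - 1) div W"
  let ?E = "hubbed_wheel d s"
  have T: "2 \<le> T" "3 * T + 1 \<le> d" "2 \<le> s \<Longrightarrow> 4 \<le> T" and s: "1 \<le> s"
    using st dt unfolding fan_case_def T_def by auto
  have W: "0 < W" "W = spacing s T" using T s unfolding W_def T_def spacing_def by auto
  have q: "d \<le> q * W" "(q - 1) * W < d"
    using round_up_div[OF W(1), of d] T unfolding q_def by (auto simp: diff_mult_distrib)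
  have rainbow_iff: "has_rainbow_copy ?E c (fan_vertices t) (fan_edges t)
      \<longleftrightarrow> (\<exists>a<s. \<exists>j<d. inj_on c (window d T a j))" for c
    using has_rainbow_fan_iff_rainbow_window[OF st] T dt unfolding T_def by simp
  have "has_rainbow_copy ?E c (fan_vertices t) (fan_edges t)"
    if "(s + 1) * d - q < card (c ` ?E)" for c :: "(nat + nat) set \<Rightarrow> nat"
  proof (rule ccontr)
    assume "\<not> ?thesis"
    then have "d \<le> W * (card ?E - card (c ` ?E))"
      using no_rainbow_window_colour_bound[OF s T(1,2), of c] T(3) rainbow_iff W(2) by fastforce
    also have "\<dots> \<le> W * (q - 1)"
      using that card_hubbed_wheel[of d s] T by (intro mult_left_mono) auto
    finally show False using q(2) by (simp add: mult.commute)
  qed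
  moreover have "\<exists>c0 :: (nat + nat) set \<Rightarrow> nat. (s + 1) * d - q \<le> card (c0 ` ?E)
      \<and> (\<forall>a<s. \<forall>j<d. \<not> inj_on c0 (window d T a j))"
  proof (cases "s = 1")
    case True
    then show ?thesis
      using colouring_without_rainbow_window_one_hub[OF T(1,2)] q W(2) by (simp add: spacing_def)
  next
    case False
    then show ?thesis
      using colouring_without_rainbow_window_many_hubs[of T d q] q W(2) T s by (simp add: spacing_def)
  qed
  then obtain c0 :: "(nat + nat) set \<Rightarrow> nat" where "(s + 1) * d - q \<le> card (c0 ` ?E)"
    "\<forall>a<s. \<forall>j<d. \<not> inj_on c0 (window d T a j)"
    by blast
  ultimately show ?thesis
    unfolding q_def by (intro rainbow_number_eqI[of _ _ _ _ c0]) (auto simp: rainbow_iff)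
qed

lemma rainbow_number_hubbed_wheel_fan_floor:
  assumes st: "fan_case s t" and dt: "3 * t \<le> d + 5"
  shows "int (rainbow_number (hubbed_wheel d s) (fan_vertices t) (fan_edges t))
           = \<lfloor>real ((s + 1) * d) - real d / real (spacing s (t - 2))\<rfloor> + 1"
proof -
  let ?W = "spacing s (t - 2)"
  let ?q = "(d + ?W - 1) div ?W"
  have W: "0 < ?W" using st unfolding fan_case_def spacing_def by auto
  have "d \<le> d * ?W" using W by (simp add: Suc_le_eq)
  moreover have "(d + 1) * ?W = d * ?W + ?W" by simp
  ultimately have "?q * ?W < (d + 1) * ?W" using round_up_div(2)[OF W, of d] by linarith
  then have "?q \<le> (s + 1) * d" by (simp only: mult_less_cancel2) simp
  then show ?thesis
    using rainbow_number_hubbed_wheel_fan[OF st dt] floor_of_nat_minus_divide[OF W, of "(s + 1) * d" d]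
    by simp
qed

theorem theorem1p2:
  fixes d s t :: nat
  assumes "d > 0" and "s > 0" and "t > 0" and "int d \<ge> 3 * int t - 5"
  shows "(s = 1 \<and> t \<ge> 4 \<longrightarrow>
           int (rainbow_number (hubbed_wheel d s) (fan_vertices t) (fan_edges t)) =
             \<lfloor>(2 * real t - 5) / (real t - 2) * real d\<rfloor> + 1)
       \<and> (s = 2 \<and> t \<ge> 6 \<longrightarrow>
           int (rainbow_number (hubbed_wheel d s) (fan_vertices t) (fan_edges t)) =
             \<lfloor>(3 * real t - 10) / (real t - 3) * real d\<rfloor> + 1)
       \<and> (s \<ge> 3 \<and> t \<ge> 7 \<longrightarrow>
           int (rainbow_number (hubbed_wheel d s) (fan_vertices t) (fan_edges t)) =
             \<lfloor>((real s + 1) * real t - (3 * real s + 4)) / (real t - 3) * real d\<rfloor> + 1)"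
proof -
  let ?rb = "rainbow_number (hubbed_wheel d s) (fan_vertices t) (fan_edges t)"
  have dt: "3 * t \<le> d + 5" using assms(4) by linarith
  note closed_form = rainbow_number_hubbed_wheel_fan_floor[OF _ dt, unfolded fan_case_def]
  show ?thesis
  proof (intro conjI impI)
    assume st: "s = 1 \<and> 4 \<le> t"
    then have "(2 * real t - 5) / (real t - 2) * real d = real ((s + 1) * d) - real d / (real t - 2)"
      by (simp add: field_simps)
    then show "int ?rb = \<lfloor>(2 * real t - 5) / (real t - 2) * real d\<rfloor> + 1"
      using closed_form st by (simp add: spacing_def of_nat_diff)
  next
    assume st: "s = 2 \<and> 6 \<le> t"
    then have "(3 * real t - 10) / (real t - 3) * real d = real ((s + 1) * d) - real d / (real t - 3)"
      by (simp add: field_simps)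
    then show "int ?rb = \<lfloor>(3 * real t - 10) / (real t - 3) * real d\<rfloor> + 1"
      using closed_form st by (simp add: spacing_def of_nat_diff)
  next
    assume st: "3 \<le> s \<and> 7 \<le> t"
    then have "((real s + 1) * real t - (3 * real s + 4)) / (real t - 3) * real d
        = real ((s + 1) * d) - real d / (real t - 3)"
      by (simp add: field_simps)
    then show "int ?rb = \<lfloor>((real s + 1) * real t - (3 * real s + 4)) / (real t - 3) * real d\<rfloor> + 1"
      using closed_form st by (simp add: spacing_def of_nat_diff)
  qed
qed

end
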